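(* Let $\omega_\xi$ be a pure translation-invariant stabilizer state on the spin-$1/2$ chain whose stabilizer generator $W(\xi)$ has length $2n+1$. Then with respect to any bipartite cut of the chain into a left and a right half-chain, $\omega_\xi$ contains exactly $n$ maximally entangled qubit pairs, i.e. $E(\omega_\xi)=\frac{\mathrm{length}(\xi)-1}{2}=n$.
   Context: $\mathcal{P}$ = Laurent polynomials in $u$ over $\mathbb{Z}_2$, $\mathcal{R}$ its palindromes. For $\xi=(\xi_+,\xi_-)\in\mathcal{P}^2$, $W(\xi)=\bigotimes_x W(\xi_+(x),\xi_-(x))$ on the chain $\bigotimes_{x\in\mathbb{Z}}M_2$ (coefficient of $u^x$ at site $x$), with $W(0,0)=\mathbb{1},W(1,0)=\sigma_1,W(0,1)=\sigma_3,W(1,1)=-i\sigma_2$. For $\xi$ reflection invariant ($\xi_\pm\in\mathcal{R}$) with $\gcd(\xi_+,\xi_-)=1$, the pure translation-invariant stabilizer state $\omega_\xi$ is the unique state with $\omega_\xi(A)=1$ for all $A$ in the stabilizer group $\mathcal{S}$ generated by all lattice translates of $W(\xi)$. The length of $\xi$ is the number of sites between the leftmost and rightmost non-identity factor of $W(\xi)$, inclusive (it equals $2\deg\xi+1$, $\deg\xi$ the highest exponent occurring in $\xi_\pm$). For a cut into half-chains $A$ (left) and $B$ (right), $E(\omega_\xi)$, the number of maximally entangled qubit pairs, is the number of pairs $(W(\eta^i),W(\zeta^i))$ of elements of $\mathcal{S}$ supported on both sides of the cut whose restrictions to $A$ anticommute within each pair, commute between different pairs, and commute with every element of $\mathcal{S}$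 supported entirely in $A$ (each such pair behaves as a pair $(\sigma_1^A\otimes\sigma_1^B,\sigma_3^A\otimes\sigma_3^B)$ stabilizing a Bell pair), taken maximal. *)

theory Defs
  imports "HOL-Library.Poly_Mapping" "HOL-Library.Z2"
begin

text \<open>Laurent polynomials in u over Z2: finitely supported maps int to bit;
  coefficient of u^x at key x. The ring structure is the convolution product
  of Poly_Mapping, i.e. ordinary Laurent polynomial multiplication.\<close>
type_synonym lpoly = "int \<Rightarrow>\<^sub>0 bit"

text \<open>A Pauli vector xi = (xi_plus, xi_minus) labels W(xi) up to phase.\<close>
type_synonym pvec = "lpoly \<times> lpoly"

definition palindrome :: "lpoly \<Rightarrow> bool" where
  "palindrome p \<longleftrightarrow> (\<forall>x. Poly_Mapping.lookup p x = Poly_Mapping.lookup p (- x))"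

text \<open>gcd(p,q)=1 in the Laurent polynomial ring: every common divisor is a unit (divides 1)
  (same as the library notion coprime, which needs a class not instantiated here).\<close>
definition lcoprime :: "lpoly \<Rightarrow> lpoly \<Rightarrow> bool" where
  "lcoprime p q \<longleftrightarrow> (\<forall>d. d dvd p \<longrightarrow> d dvd q \<longrightarrow> d dvd 1)"

definition reflection_invariant :: "pvec \<Rightarrow> bool" where
  "reflection_invariant xi \<longleftrightarrow> palindrome (fst xi) \<and> palindrome (snd xi)"

text \<open>Sites where W(xi) has a non-identity tensor factor.\<close>
definition supp :: "pvec \<Rightarrow> int set" where
  "supp xi = Poly_Mapping.keys (fst xi) \<union> Poly_Mapping.keys (snd xi)"

definition plength :: "pvec \<Rightarrow> nat" where
  "plength xi = nat (Max (supp xi) - Min (supp xi) + 1)"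

text \<open>Stabilizer group generated by all translates of W(xi), up to phases:
  products of translates W(u^k xi) are (up to phase) W(f xi) for a Laurent polynomial f.\<close>
definition stab :: "pvec \<Rightarrow> pvec set" where
  "stab xi = {(f * fst xi, f * snd xi) | f. True}"

text \<open>Symplectic form restricted to a set of sites A: the restrictions of W(eta), W(zeta)
  to A commute iff this is 0 and anticommute iff it is 1.\<close>
definition sympl_on :: "int set \<Rightarrow> pvec \<Rightarrow> pvec \<Rightarrow> bit" where
  "sympl_on A eta zeta =
     (\<Sum>x \<in> (supp eta \<inter> supp zeta) \<inter> A.
        Poly_Mapping.lookup (fst eta) x * Poly_Mapping.lookup (snd zeta) x + Poly_Mapping.lookup (snd eta) x * Poly_Mapping.lookup (fst zeta) x)"

definition left_half :: "int \<Rightarrow> int set" where "left_half c = {..c}"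
definition right_half :: "int \<Rightarrow> int set" where "right_half c = {c<..}"

definition bell_pairs :: "pvec \<Rightarrow> int \<Rightarrow> nat \<Rightarrow> (nat \<Rightarrow> pvec) \<Rightarrow> (nat \<Rightarrow> pvec) \<Rightarrow> bool" where
  "bell_pairs xi c k eta zeta \<longleftrightarrow>
     (\<forall>i<k. eta i \<in> stab xi \<and> zeta i \<in> stab xi
        \<and> supp (eta i) \<inter> left_half c \<noteq> {} \<and> supp (eta i) \<inter> right_half c \<noteq> {}
        \<and> supp (zeta i) \<inter> left_half c \<noteq> {} \<and> supp (zeta i) \<inter> right_half c \<noteq> {}
        \<and> sympl_on (left_half c) (eta i) (zeta i) = 1
        \<and> (\<forall>s \<in> stab xi. supp s \<subseteq> left_half c \<longrightarrow>
              sympl_on (left_half c) (eta i) s = 0 \<and> sympl_on (left_half c) (zeta i) s = 0))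
   \<and> (\<forall>i<k. \<forall>j<k. i \<noteq> j \<longrightarrow>
        sympl_on (left_half c) (eta i) (eta j) = 0 \<and> sympl_on (left_half c) (eta i) (zeta j) = 0
        \<and> sympl_on (left_half c) (zeta i) (zeta j) = 0)"

definition entanglement :: "pvec \<Rightarrow> int \<Rightarrow> nat" where
  "entanglement xi c = (GREATEST k. \<exists>eta zeta. bell_pairs xi c k eta zeta)"

end

theory Submission
  imports Defs
begin

text \<open>Every element of the stabilizer group is \<open>\<Psi> f = (f \<xi>\<^sub>+, f \<xi>\<^sub>-)\<close> for a Laurent
  polynomial \<open>f\<close>, and commutation of restrictions to the left half-chain is an alternating
  form \<open>B(f, g)\<close> on the \<open>\<int>\<^sub>2\<close>-vector space of Laurent polynomials. Since \<open>\<xi>\<close> is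
  palindromic with support \<open>[-n, n]\<close>, \<open>B(f, -)\<close> vanishes when \<open>f\<close> lives left of \<open>c - n\<close>
  (then \<open>B(f, u\<^sup>t)\<close> is the coefficient of \<open>u\<^sup>t\<close> in \<open>f \<xi>\<^sub>+ \<xi>\<^sub>- + f \<xi>\<^sub>- \<xi>\<^sub>+ = 0\<close>) or right of
  \<open>c + n\<close> (then \<open>\<Psi> f\<close> misses the left half). So \<open>B\<close> factors through restriction to the
  window of the \<open>2n\<close> sites around the cut. On the \<open>4\<^sup>n\<close> polynomials supported in the window
  \<open>B\<close> is nondegenerate: by Bezout for the coprime pair \<open>\<xi>\<^sub>+, \<xi>\<^sub>-\<close>, a polynomial orthogonal to
  everything splits into a part left of \<open>c - n\<close> and a part right of \<open>c + n\<close>. A symplectic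
  basis of this space yields \<open>n\<close> Bell pairs; conversely \<open>k\<close> Bell pairs produce \<open>4\<^sup>k\<close>
  window polynomials pairwise separated by \<open>B\<close>, so \<open>k \<le> n\<close>.\<close>

section \<open>Laurent polynomials over \<open>\<int>\<^sub>2\<close>\<close>

abbreviation lookup :: "lpoly \<Rightarrow> int \<Rightarrow> bit" where "lookup \<equiv> Poly_Mapping.lookup"
abbreviation keys :: "lpoly \<Rightarrow> int set" where "keys \<equiv> Poly_Mapping.keys"
abbreviation monomial :: "int \<Rightarrow> lpoly" where "monomial t \<equiv> Poly_Mapping.single t 1"

text \<open>The default simp rules turn \<open>+\<close> and \<open>*\<close> on \<open>bit\<close> into \<open>xor\<close> and \<open>and\<close>, after which sums
  of bits are rewritten into cardinalities; we keep plain ring arithmetic instead.\<close>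

declare add_bit_eq_xor [simp del] mult_bit_eq_and [simp del]

lemma bit_add_self [simp]: "(a::bit) + a = 0"
  by (cases a) simp_all

lemma bit_mult_eq_1_iff [simp]: "(a::bit) * b = 1 \<longleftrightarrow> a = 1 \<and> b = 1"
  by (cases a) simp_all

lemma lpoly_add_self [simp]: "(p::lpoly) + p = 0"
  by (rule poly_mapping_eqI) (simp only: lookup_add lookup_zero, simp)

lemma lpoly_two [simp]: "(2::lpoly) = 0"
  by (metis one_add_one lpoly_add_self)

lemma lpoly_add_eq_0_iff: "(p::lpoly) + q = 0 \<longleftrightarrow> p = q"
  by (metis add.assoc add.left_neutral lpoly_add_self)

lemma lookup_mult_keys: "lookup (f * g) k = (\<Sum>l\<in>keys f. lookup f l * lookup g (k - l))"
proof -
  have "(\<Sum>q. lookup g q when k = l + q) = (\<Sum>q. lookup g q when q = k - l)" for l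
    by (rule Sum_any.cong) (auto simp: when_def)
  then have "lookup (f * g) k = (\<Sum>l. lookup f l * lookup g (k - l))"
    by (simp add: lookup_mult)
  also have "\<dots> = (\<Sum>l\<in>keys f. lookup f l * lookup g (k - l))"
    by (rule Sum_any.expand_superset) (auto simp: in_keys_iff)
  finally show ?thesis .
qed

lemma lookup_monomial_mult: "lookup (monomial a * g) x = lookup g (x - a)"
  by (simp add: lookup_mult_keys)

lemma lookup_sum_monomial:
  "finite A \<Longrightarrow> lookup (\<Sum>t\<in>A. monomial t) x = (if x \<in> A then 1 else 0)"
  by (simp add: lookup_sum lookup_single when_def)

lemma keys_sum_monomial: "finite A \<Longrightarrow> keys (\<Sum>t\<in>A. monomial t) = A"
  by (auto simp: in_keys_iff lookup_sum_monomial split: if_splits)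

lemma sum_monomial_keys: "(\<Sum>t\<in>keys f. monomial t) = f"
  by (rule poly_mapping_eqI) (simp add: lookup_sum_monomial in_keys_iff)

lemma card_lpoly_keys_subset:
  assumes "finite W"
  shows "card {f. keys f \<subseteq> W} = 2 ^ card W"
proof -
  have "bij_betw keys {f. keys f \<subseteq> W} (Pow W)"
  proof (rule bij_betw_byWitness[where f' = "\<lambda>A. \<Sum>t\<in>A. monomial t"])
    have "keys (\<Sum>t\<in>A. monomial t) = A" if "A \<subseteq> W" for A
      using assms that by (metis finite_subset keys_sum_monomial)
    then show "\<forall>A\<in>Pow W. keys (\<Sum>t\<in>A. monomial t) = A"
      and "(\<lambda>A. \<Sum>t\<in>A. monomial t) ` Pow W \<subseteq> {f. keys f \<subseteq> W}"
      by auto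
  qed (auto simp: sum_monomial_keys)
  then show ?thesis
    using assms by (simp add: bij_betw_same_card card_Pow)
qed

lemma unique_sum_in_keys_mult:
  assumes a: "a \<in> keys p" and b: "b \<in> keys q"
    and unique: "\<And>a'. a' \<in> keys p \<Longrightarrow> a + b - a' \<in> keys q \<Longrightarrow> a' = a"
  shows "a + b \<in> keys (p * q)"
proof -
  have rest: "(\<Sum>l\<in>keys p - {a}. lookup p l * lookup q (a + b - l)) = 0"
    using unique by (intro sum.neutral) (auto simp: in_keys_iff)
  have "lookup (p * q) (a + b) =
      lookup p a * lookup q (a + b - a) + (\<Sum>l\<in>keys p - {a}. lookup p l * lookup q (a + b - l))"
    using a by (simp only: lookup_mult_keys sum.remove[OF finite_keys])
  also have "\<dots> = lookup p a * lookup q b"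
    by (simp only: rest add_0_right add_diff_cancel_left')
  finally show ?thesis
    using a b by (simp add: in_keys_iff)
qed

lemma keys_mult_bounds:
  assumes "x \<in> keys (p * q)"
  shows "Min (keys p) + Min (keys q) \<le> x \<and> x \<le> Max (keys p) + Max (keys q)"
  using subsetD[OF keys_mult assms] by (force intro: add_mono Min_le Max_ge)

lemma Max_keys_mult:
  assumes "p \<noteq> 0" "q \<noteq> 0"
  shows "Max (keys (p * q)) = Max (keys p) + Max (keys q)"
proof (rule Max_eqI)
  show "Max (keys p) + Max (keys q) \<in> keys (p * q)"
  proof (rule unique_sum_in_keys_mult)
    fix a' assume "a' \<in> keys p" "Max (keys p) + Max (keys q) - a' \<in> keys q"
    then have "a' \<le> Max (keys p)" "Max (keys p) + Max (keys q) - a' \<le> Max (keys q)"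
      by simp_all
    then show "a' = Max (keys p)" by linarith
  qed (use assms in simp_all)
qed (use keys_mult_bounds in auto)

lemma Min_keys_mult:
  assumes "p \<noteq> 0" "q \<noteq> 0"
  shows "Min (keys (p * q)) = Min (keys p) + Min (keys q)"
proof (rule Min_eqI)
  show "Min (keys p) + Min (keys q) \<in> keys (p * q)"
  proof (rule unique_sum_in_keys_mult)
    fix a' assume "a' \<in> keys p" "Min (keys p) + Min (keys q) - a' \<in> keys q"
    then have "Min (keys p) \<le> a'" "Min (keys q) \<le> Min (keys p) + Min (keys q) - a'"
      by simp_all
    then show "a' = Min (keys p)" by linarith
  qed (use assms in simp_all)
qed (use keys_mult_bounds in auto)

section \<open>Division with remainder and Bezout's identity\<close>

definition width :: "lpoly \<Rightarrow> nat" where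
  "width p = nat (Max (keys p) - Min (keys p))"

lemma width_reduction:
  assumes p: "p \<noteq> 0" and d: "d \<noteq> 0" and le: "width d \<le> width p"
  defines "p' \<equiv> p + monomial (Max (keys p) - Max (keys d)) * d"
  shows "p' = 0 \<or> width p' < width p"
proof -
  let ?k = "Max (keys p) - Max (keys d)"
  have lookup_p': "lookup p' x = lookup p x + lookup d (x - ?k)" for x
    unfolding p'_def by (simp only: lookup_add lookup_monomial_mult)
  have keys_p': "keys p' \<subseteq> {Min (keys p) .. Max (keys p) - 1}"
  proof
    fix x assume x: "x \<in> keys p'"
    then have "x \<in> keys p \<or> x - ?k \<in> keys d"
      by (auto simp: in_keys_iff lookup_p')
    moreover have "Min (keys d) \<le> Max (keys d)" "Min (keys p) \<le> Max (keys p)"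
      using p d by simp_all
    ultimately have "Min (keys p) \<le> x \<and> x \<le> Max (keys p)"
      using le unfolding width_def by (force dest: Min_le[OF finite_keys] Max_ge[OF finite_keys])
    moreover have "x \<noteq> Max (keys p)"
    proof
      assume "x = Max (keys p)"
      moreover have "Max (keys p) \<in> keys p" "Max (keys d) \<in> keys d"
        using p d by simp_all
      ultimately show False
        using x by (simp add: in_keys_iff lookup_p')
    qed
    ultimately show "x \<in> {Min (keys p) .. Max (keys p) - 1}" by simp
  qed
  have "width p' < width p" if "p' \<noteq> 0"
  proof -
    from that have "Max (keys p') \<in> keys p'" "Min (keys p') \<in> keys p'"
      and ordered: "Min (keys p') \<le> Max (keys p')"
      by simp_all
    with keys_p' have "Max (keys p') \<le> Max (keys p) - 1" "Min (keys p) \<le> Min (keys p')"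
      by auto
    with ordered show "width p' < width p"
      unfolding width_def by (subst nat_less_eq_zless) linarith+
  qed
  then show ?thesis by blast
qed

lemma lpoly_division:
  assumes d: "d \<noteq> 0"
  shows "\<exists>q r. p = q * d + r \<and> (r = 0 \<or> width r < width d)"
proof (induction "width p" arbitrary: p rule: less_induct)
  case less
  show ?case
  proof (cases "p = 0 \<or> width p < width d")
    case True
    then show ?thesis by (intro exI[of _ 0] exI[of _ p]) auto
  next
    case False
    define m where "m = monomial (Max (keys p) - Max (keys d))"
    have reduced: "p + m * d = 0 \<or> width (p + m * d) < width p"
      using False d unfolding m_def by (intro width_reduction) auto
    obtain q r where qr: "p + m * d = q * d + r" "r = 0 \<or> width r < width d"
    proof (cases "p + m * d = 0")
      case True
      then show ?thesis using that[of 0 0] by simp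
    next
      case False
      then show ?thesis using reduced less that by blast
    qed
    have "p = (p + m * d) + m * d" by (simp add: add.assoc)
    also have "\<dots> = (q + m) * d + r"
      unfolding qr(1) by (simp add: algebra_simps)
    finally show ?thesis using qr(2) by blast
  qed
qed

lemma lcoprime_bezout:
  assumes "lcoprime a b"
  shows "\<exists>s t. s * a + t * b = 1"
proof -
  define ideal where "ideal = {s * a + t * b | s t. True}"
  have "a \<noteq> 0 \<or> b \<noteq> 0"
    using assms unfolding lcoprime_def by (metis dvd_0_left_iff dvd_0_right zero_neq_one)
  moreover have "a = 1 * a + 0 * b" "b = 0 * a + 1 * b" by simp_all
  then have "a \<in> ideal" "b \<in> ideal"
    unfolding ideal_def by blast+
  ultimately obtain g0 where "g0 \<in> ideal \<and> g0 \<noteq> 0" by blast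
  then obtain g where g: "g \<in> ideal" "g \<noteq> 0"
    and g_min: "\<forall>h. h \<in> ideal \<and> h \<noteq> 0 \<longrightarrow> width g \<le> width h"
    using ex_has_least_nat[of "\<lambda>h. h \<in> ideal \<and> h \<noteq> 0" g0 width] by blast
  obtain s t where st: "g = s * a + t * b"
    using g(1) unfolding ideal_def by blast
  have "g dvd h" if h_ideal: "h \<in> ideal" for h
  proof -
    obtain q r where qr: "h = q * g + r" "r = 0 \<or> width r < width g"
      using lpoly_division[OF g(2)] by blast
    obtain s' t' where h: "h = s' * a + t' * b"
      using h_ideal unfolding ideal_def by blast
    have "r = h + q * g"
      using qr(1) by (simp add: add.assoc)
    also have "\<dots> = (s' + q * s) * a + (t' + q * t) * b"
      by (simp add: h st algebra_simps)
    finally have "r \<in> ideal"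
      unfolding ideal_def by blast
    then have "r = 0"
      using qr(2) g_min by (meson not_le)
    then show ?thesis using qr(1) by simp
  qed
  then have "g dvd 1"
    using assms \<open>a \<in> ideal\<close> \<open>b \<in> ideal\<close> unfolding lcoprime_def by blast
  then obtain u where "1 = g * u" by (elim dvdE)
  then have "(u * s) * a + (u * t) * b = 1"
    by (simp add: st algebra_simps)
  then show ?thesis by blast
qed

lemma lcoprime_common_factor:
  assumes "lcoprime p q" and "a * q = b * p"
  shows "\<exists>h. a = h * p \<and> b = h * q"
proof -
  obtain s t where st: "s * p + t * q = 1"
    using lcoprime_bezout[OF assms(1)] by blast
  define h where "h = s * a + t * b"
  have "h * p = s * a * p + t * (b * p)"
    by (simp add: h_def algebra_simps)
  also have "\<dots> = a * (s * p + t * q)"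
    by (simp add: assms(2)[symmetric] algebra_simps)
  finally have "a = h * p"
    by (simp add: st)
  have "h * q = s * (a * q) + t * b * q"
    by (simp add: h_def algebra_simps)
  also have "\<dots> = b * (s * p + t * q)"
    by (simp add: assms(2) algebra_simps)
  finally have "b = h * q"
    by (simp add: st)
  with \<open>a = h * p\<close> show ?thesis by blast
qed

section \<open>Alternating forms over \<open>\<int>\<^sub>2\<close>\<close>

definition bit_scale :: "bit \<Rightarrow> 'a::zero \<Rightarrow> 'a" where
  "bit_scale a x = (if a = 1 then x else 0)"

lemma UNIV_bit: "(UNIV :: bit set) = {0, 1}"
proof -
  have "x = 0 \<or> x = 1" for x :: bit
    by (cases x) simp_all
  then show ?thesis by auto
qed

locale alternating_form =
  fixes B :: "'a::ab_group_add \<Rightarrow> 'a \<Rightarrow> bit"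
  assumes add_left: "B (x + y) z = B x z + B y z"
    and commute: "B x y = B y x"
    and alternating [simp]: "B x x = 0"
begin

lemma zero_left [simp]: "B 0 y = 0"
  using add_left[of 0 0 y] by simp

lemma diff_left: "B (x - y) z = B x z + B y z"
proof -
  have "B x z = B (x - y) z + B y z"
    using add_left[of "x - y" y z] by (simp only: diff_add_cancel)
  then show ?thesis
    by (cases "B x z"; cases "B y z"; cases "B (x - y) z") simp_all
qed

lemma scale_left: "B (bit_scale a x) y = a * B x y"
  by (cases a) (simp_all add: bit_scale_def)

lemma sum_left: "B (sum f A) y = (\<Sum>a\<in>A. B (f a) y)"
  by (induction A rule: infinite_finite_induct) (simp_all add: add_left)

lemma sum_right: "B x (sum f A) = (\<Sum>a\<in>A. B x (f a))"
  by (simp only: commute[of x] sum_left)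

definition symplectic_pairs :: "nat \<Rightarrow> (nat \<Rightarrow> 'a) \<Rightarrow> (nat \<Rightarrow> 'a) \<Rightarrow> bool" where
  "symplectic_pairs k e z \<longleftrightarrow>
     (\<forall>i<k. B (e i) (z i) = 1) \<and>
     (\<forall>i<k. \<forall>j<k. i \<noteq> j \<longrightarrow> B (e i) (e j) = 0 \<and> B (e i) (z j) = 0 \<and> B (z i) (z j) = 0)"

lemma symplectic_pairs_swap: "symplectic_pairs k e z \<Longrightarrow> symplectic_pairs k z e"
  unfolding symplectic_pairs_def by (auto simp: commute[of "z _" "e _"])

definition orth_proj :: "'a \<Rightarrow> 'a \<Rightarrow> 'a \<Rightarrow> 'a" where
  "orth_proj f g w = w - bit_scale (B w g) f - bit_scale (B w f) g"

lemma orth_proj_orthogonal: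
  assumes "B f g = 1"
  shows "B (orth_proj f g w) f = 0" "B (orth_proj f g w) g = 0"
  using assms commute[of g f] by (simp_all add: orth_proj_def diff_left scale_left)

lemma pairing_orth_proj:
  assumes "B x f = 0" "B x g = 0"
  shows "B x (orth_proj f g w) = B x w"
  using assms by (simp add: orth_proj_def commute[of x] diff_left scale_left)

lemma card_eq_4_mult_card_orthogonal:
  assumes diff_closed: "\<And>x y. x \<in> S \<Longrightarrow> y \<in> S \<Longrightarrow> x - y \<in> S"
    and f: "f \<in> S" and g: "g \<in> S" and fg: "B f g = 1"
  shows "card S = 4 * card {v \<in> S. B v f = 0 \<and> B v g = 0}"
proof -
  let ?S' = "{v \<in> S. B v f = 0 \<and> B v g = 0}"
  have "0 \<in> S" using diff_closed[OF f f] by simp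
  then have add_closed: "x + y \<in> S" if "x \<in> S" "y \<in> S" for x y
    using diff_closed[OF that(1) diff_closed[OF \<open>0 \<in> S\<close> that(2)]] by simp
  have scale_closed: "bit_scale a x \<in> S" if "x \<in> S" for a x
    using that \<open>0 \<in> S\<close> by (simp add: bit_scale_def)
  have gf: "B g f = 1" using fg commute[of g f] by simp
  define h where "h = (\<lambda>(v, a, b). v + bit_scale a f + bit_scale b g)"
  define h' where "h' w = (orth_proj f g w, B w g, B w f)" for w
  have "bij_betw h (?S' \<times> UNIV \<times> UNIV) S"
  proof (rule bij_betw_byWitness[where f' = h'])
    have "h' (h (v, a, b)) = (v, a, b)" if "v \<in> ?S'" for v a b
    proof -
      have "B (h (v, a, b)) g = a" "B (h (v, a, b)) f = b"
        using that fg gf by (simp_all add: h_def add_left scale_left)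
      then show ?thesis
        by (simp add: h_def h'_def orth_proj_def)
    qed
    then show "\<forall>x\<in>?S' \<times> UNIV \<times> UNIV. h' (h x) = x"
      by auto
    show "\<forall>w\<in>S. h (h' w) = w"
      by (simp add: h_def h'_def orth_proj_def)
    show "h ` (?S' \<times> UNIV \<times> UNIV) \<subseteq> S"
      using f g by (auto simp: h_def intro!: add_closed scale_closed)
    have "orth_proj f g w \<in> S" if "w \<in> S" for w
      unfolding orth_proj_def using that f g by (intro diff_closed scale_closed)
    then show "h' ` S \<subseteq> ?S' \<times> UNIV \<times> UNIV"
      using orth_proj_orthogonal[OF fg] by (auto simp: h'_def)
  qed
  then have "card S = card (?S' \<times> (UNIV :: bit set) \<times> (UNIV :: bit set))"
    by (simp add: bij_betw_same_card)
  then show ?thesis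
    by (simp add: card_cartesian_product UNIV_bit)
qed

lemma symplectic_basis_exists:
  assumes "\<And>x y. x \<in> S \<Longrightarrow> y \<in> S \<Longrightarrow> x - y \<in> S"
    and "card S = 4 ^ m"
    and "\<And>x. x \<in> S \<Longrightarrow> x \<noteq> 0 \<Longrightarrow> \<exists>y\<in>S. B x y = 1"
  shows "\<exists>e z. (\<forall>i<m. e i \<in> S \<and> z i \<in> S) \<and> symplectic_pairs m e z"
  using assms
proof (induction m arbitrary: S)
  case 0
  show ?case by (simp add: symplectic_pairs_def)
next
  case (Suc m)
  note diff_closed = Suc.prems(1) and nondeg = Suc.prems(3)
  have "S \<noteq> {}"
    using Suc.prems(2) by auto
  then have "0 \<in> S"
    using diff_closed by fastforce
  moreover have "S \<noteq> {0}"
    using Suc.prems(2) by auto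
  ultimately obtain f where f: "f \<in> S" "f \<noteq> 0"
    by blast
  then obtain g where g: "g \<in> S" and fg: "B f g = 1"
    using nondeg by blast
  define S' where "S' = {v \<in> S. B v f = 0 \<and> B v g = 0}"
  have "card S = 4 * card S'"
    unfolding S'_def using diff_closed f(1) g fg by (rule card_eq_4_mult_card_orthogonal)
  then have "card S' = 4 ^ m"
    using Suc.prems(2) by simp
  moreover have "x - y \<in> S'" if "x \<in> S'" "y \<in> S'" for x y
    using that diff_closed by (simp add: S'_def diff_left)
  moreover have "\<exists>y\<in>S'. B x y = 1" if x: "x \<in> S'" "x \<noteq> 0" for x
  proof -
    obtain w where "w \<in> S" "B x w = 1"
      using x nondeg unfolding S'_def by blast
    moreover have "orth_proj f g w \<in> S"
      unfolding orth_proj_def using \<open>w \<in> S\<close> f g \<open>0 \<in> S\<close> diff_closed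
      by (simp add: bit_scale_def)
    ultimately show ?thesis
      using x orth_proj_orthogonal[OF fg] pairing_orth_proj unfolding S'_def by auto
  qed
  ultimately obtain e z where ez: "\<forall>i<m. e i \<in> S' \<and> z i \<in> S'" "symplectic_pairs m e z"
    using Suc.IH by blast
  have orth: "B (e i) f = 0 \<and> B (e i) g = 0 \<and> B (z i) f = 0 \<and> B (z i) g = 0" if "i < m" for i
    using ez(1) that unfolding S'_def by blast
  then have "B f (e i) = 0 \<and> B g (e i) = 0 \<and> B f (z i) = 0 \<and> B g (z i) = 0" if "i < m" for i
    using that by (simp add: commute[of f] commute[of g])
  with orth have "symplectic_pairs (Suc m) (e(m := f)) (z(m := g))"
    using ez(2) fg unfolding symplectic_pairs_def by (auto simp: less_Suc_eq)
  moreover have "\<forall>i<Suc m. (e(m := f)) i \<in> S \<and> (z(m := g)) i \<in> S"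
    using ez(1) f g by (simp add: S'_def less_Suc_eq)
  ultimately show ?case by blast
qed

lemma symplectic_pairs_coordinate:
  assumes pairs: "symplectic_pairs k e z" and "P \<subseteq> {..<k}" "Q \<subseteq> {..<k}" "i < k"
  shows "B (sum e P + sum z Q) (z i) = of_bool (i \<in> P)"
proof -
  have fin: "finite P" "finite Q"
    using assms(2,3) finite_subset by blast+
  have "B (e j) (z i) = (if j = i then 1 else 0)" if "j \<in> P" for j
    using pairs that assms(2,4) unfolding symplectic_pairs_def by auto
  then have "B (sum e P) (z i) = of_bool (i \<in> P)"
    using fin(1) by (simp add: sum_left sum.delta)
  moreover have "B (z j) (z i) = 0" if "j \<in> Q" for j
    using pairs that assms(3,4) unfolding symplectic_pairs_def by (cases "j = i") auto
  then have "B (sum z Q) (z i) = 0"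
    by (simp add: sum_left)
  ultimately show ?thesis
    by (simp add: add_left)
qed

lemma symplectic_pairs_card_bound:
  assumes pairs: "symplectic_pairs k e z"
    and factors: "\<And>x x' y. \<pi> x = \<pi> x' \<Longrightarrow> B x y = B x' y"
    and T: "finite T" "range \<pi> \<subseteq> T"
  shows "4 ^ k \<le> card T"
proof -
  define D where "D = Pow {..<k} \<times> Pow {..<k}"
  define \<sigma> where "\<sigma> = (\<lambda>(P, Q). sum e P + sum z Q)"
  have "inj_on (\<pi> \<circ> \<sigma>) D"
  proof (rule inj_onI)
    fix x y assume x: "x \<in> D" and y: "y \<in> D" and eq: "(\<pi> \<circ> \<sigma>) x = (\<pi> \<circ> \<sigma>) y"
    obtain P Q where x_eq: "x = (P, Q)" by (cases x)
    obtain P' Q' where y_eq: "y = (P', Q')" by (cases y)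
    have sub: "P \<subseteq> {..<k}" "Q \<subseteq> {..<k}" "P' \<subseteq> {..<k}" "Q' \<subseteq> {..<k}"
      using x y unfolding x_eq y_eq D_def by simp_all
    have "B (\<sigma> x) w = B (\<sigma> y) w" for w
      using eq by (intro factors) simp
    then have same: "B (sum e P + sum z Q) w = B (sum e P' + sum z Q') w" for w
      unfolding x_eq y_eq \<sigma>_def by simp
    have "i \<in> P \<longleftrightarrow> i \<in> P'" if "i < k" for i
      using same[of "z i"] symplectic_pairs_coordinate[OF pairs] sub that by (simp add: of_bool_eq_iff)
    moreover have "i \<in> Q \<longleftrightarrow> i \<in> Q'" if "i < k" for i
      using same[of "e i"] symplectic_pairs_coordinate[OF symplectic_pairs_swap[OF pairs]] sub that
      by (simp add: add.commute of_bool_eq_iff)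
    ultimately show "x = y"
      unfolding x_eq y_eq using sub by blast
  qed
  moreover have "(\<pi> \<circ> \<sigma>) ` D \<subseteq> T"
    using T(2) by auto
  ultimately have "card D \<le> card T"
    using T(1) by (rule card_inj_on_le)
  moreover have "card D = 4 ^ k"
    by (simp add: D_def card_cartesian_product card_Pow power_mult_distrib[symmetric])
  ultimately show ?thesis by simp
qed

end

section \<open>The symplectic form on Pauli vectors\<close>

definition sympl_at :: "pvec \<Rightarrow> pvec \<Rightarrow> int \<Rightarrow> bit" where
  "sympl_at \<eta> \<zeta> x = lookup (fst \<eta>) x * lookup (snd \<zeta>) x + lookup (snd \<eta>) x * lookup (fst \<zeta>) x"

lemma finite_supp [simp]: "finite (supp \<eta>)"
  by (simp add: supp_def)

lemma sympl_on_eq_sum: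
  assumes "finite T" "supp \<eta> \<inter> supp \<zeta> \<subseteq> T"
  shows "sympl_on A \<eta> \<zeta> = (\<Sum>x\<in>T \<inter> A. sympl_at \<eta> \<zeta> x)"
  unfolding sympl_on_def sympl_at_def[symmetric]
proof (rule sum.mono_neutral_left)
  show "\<forall>x\<in>T \<inter> A - supp \<eta> \<inter> supp \<zeta> \<inter> A. sympl_at \<eta> \<zeta> x = 0"
    by (auto simp: sympl_at_def supp_def in_keys_iff)
qed (use assms in auto)

lemma sympl_at_commute: "sympl_at \<eta> \<zeta> x = sympl_at \<zeta> \<eta> x"
  by (simp add: sympl_at_def ac_simps)

lemma sympl_at_self [simp]: "sympl_at \<eta> \<eta> x = 0"
  by (simp add: sympl_at_def mult.commute)

lemma sympl_at_add_left:
  "sympl_at (fst \<eta> + fst \<eta>', snd \<eta> + snd \<eta>') \<zeta> x = sympl_at \<eta> \<zeta> x + sympl_at \<eta>' \<zeta> x"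
  by (simp add: sympl_at_def lookup_add algebra_simps)

lemma sympl_on_commute: "sympl_on A \<eta> \<zeta> = sympl_on A \<zeta> \<eta>"
  unfolding sympl_on_def sympl_at_def[symmetric]
  by (simp only: Int_commute[of "supp \<eta>"] sympl_at_commute)

lemma sympl_on_self: "sympl_on A \<eta> \<eta> = 0"
  unfolding sympl_on_def sympl_at_def[symmetric] by simp

lemma sympl_on_add_left:
  "sympl_on A (fst \<eta> + fst \<eta>', snd \<eta> + snd \<eta>') \<zeta> = sympl_on A \<eta> \<zeta> + sympl_on A \<eta>' \<zeta>"
proof -
  let ?T = "supp \<eta> \<union> supp \<eta>'"
  have "supp (fst \<eta> + fst \<eta>', snd \<eta> + snd \<eta>') \<subseteq> ?T"
    using keys_add[of "fst \<eta>" "fst \<eta>'"] keys_add[of "snd \<eta>" "snd \<eta>'"] by (auto simp: supp_def)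
  then have "sympl_on A (fst \<eta> + fst \<eta>', snd \<eta> + snd \<eta>') \<zeta> =
      (\<Sum>x\<in>?T \<inter> A. sympl_at (fst \<eta> + fst \<eta>', snd \<eta> + snd \<eta>') \<zeta> x)"
    by (intro sympl_on_eq_sum) auto
  also have "\<dots> = (\<Sum>x\<in>?T \<inter> A. sympl_at \<eta> \<zeta> x) + (\<Sum>x\<in>?T \<inter> A. sympl_at \<eta>' \<zeta> x)"
    by (simp only: sympl_at_add_left sum.distrib)
  also have "\<dots> = sympl_on A \<eta> \<zeta> + sympl_on A \<eta>' \<zeta>"
    by (simp only: sympl_on_eq_sum[of ?T] finite_Un finite_supp Int_lower1 le_supI1 le_supI2)
  finally show ?thesis .
qed

definition restrict_keys :: "int set \<Rightarrow> lpoly \<Rightarrow> lpoly" where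
  "restrict_keys A f = Abs_poly_mapping (\<lambda>x. if x \<in> A then lookup f x else 0)"

lemma lookup_restrict_keys: "lookup (restrict_keys A f) x = (if x \<in> A then lookup f x else 0)"
proof -
  have "finite {x. (if x \<in> A then lookup f x else 0) \<noteq> 0}"
    by (rule finite_subset[OF _ finite_keys[of f]]) (auto simp: in_keys_iff)
  then show ?thesis
    unfolding restrict_keys_def by simp
qed

lemma keys_restrict_keys [simp]: "keys (restrict_keys A f) = keys f \<inter> A"
  by (auto simp: in_keys_iff lookup_restrict_keys split: if_splits)

lemma restrict_keys_id: "keys f \<subseteq> A \<Longrightarrow> restrict_keys A f = f"
  by (rule poly_mapping_eqI) (auto simp: lookup_restrict_keys in_keys_iff)

lemma keys_add_restrict_keys: "keys (f + restrict_keys A f) \<subseteq> - A"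
  by (auto simp: in_keys_iff lookup_add lookup_restrict_keys)

lemma lookup_mult_palindrome:
  assumes "palindrome q" "finite T" "keys p \<subseteq> T"
  shows "lookup (p * q) t = (\<Sum>x\<in>T. lookup p x * lookup q (x - t))"
proof -
  have "lookup q (t - x) = lookup q (x - t)" for x
    using assms(1) unfolding palindrome_def by (metis minus_diff_eq)
  then have "lookup (p * q) t = (\<Sum>x\<in>keys p. lookup p x * lookup q (x - t))"
    by (simp only: lookup_mult_keys)
  also have "\<dots> = (\<Sum>x\<in>T. lookup p x * lookup q (x - t))"
    using assms(2,3) by (intro sum.mono_neutral_left) (auto simp: in_keys_iff)
  finally show ?thesis .
qed

section \<open>The form cut by a bipartition of the chain\<close>

locale cut_chain =
  fixes xi :: pvec and n :: nat and c :: int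
  assumes reflection_invariant: "reflection_invariant xi"
    and coprime: "lcoprime (fst xi) (snd xi)"
    and length: "plength xi = 2 * n + 1"
begin

definition Psi :: "lpoly \<Rightarrow> pvec" where
  "Psi f = (f * fst xi, f * snd xi)"

lemma supp_Psi: "supp (Psi f) = keys (f * fst xi) \<union> keys (f * snd xi)"
  by (simp add: supp_def Psi_def)

lemma stab_eq_range_Psi: "stab xi = range Psi"
  by (auto simp: stab_def Psi_def)

lemma palindromic: "palindrome (fst xi)" "palindrome (snd xi)"
  using reflection_invariant by (simp_all add: reflection_invariant_def)

lemma supp_xi_nonempty: "supp xi \<noteq> {}"
proof -
  obtain s t where "s * fst xi + t * snd xi = 1"
    using lcoprime_bezout[OF coprime] by blast
  then show ?thesis
    by (auto simp: supp_def)
qed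

lemma supp_xi_bounds: "Max (supp xi) = int n" "Min (supp xi) = - int n"
proof -
  have "lookup (fst xi) (- x) = lookup (fst xi) x" "lookup (snd xi) (- x) = lookup (snd xi) x" for x
    using palindromic unfolding palindrome_def by (metis minus_minus)+
  then have neg: "- x \<in> supp xi" if "x \<in> supp xi" for x
    using that by (auto simp: supp_def in_keys_iff)
  have "Min (supp xi) = - Max (supp xi)"
  proof (rule Min_eqI)
    show "- Max (supp xi) \<in> supp xi"
      using neg Max_in[OF finite_supp supp_xi_nonempty] by blast
    show "- Max (supp xi) \<le> y" if "y \<in> supp xi" for y
      using Max_ge[OF finite_supp neg[OF that]] by simp
  qed simp
  moreover have "Min (supp xi) \<le> Max (supp xi)"
    using supp_xi_nonempty by simp
  ultimately show "Max (supp xi) = int n" "Min (supp xi) = - int n"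
    using length unfolding plength_def by linarith+
qed

lemma keys_xi_bounds:
  assumes "s \<in> {fst xi, snd xi}" "x \<in> keys s"
  shows "- int n \<le> x" "x \<le> int n"
proof -
  have "x \<in> supp xi"
    using assms by (auto simp: supp_def)
  then have "Min (supp xi) \<le> x" "x \<le> Max (supp xi)"
    by (simp_all del: Min_le_iff Max_ge_iff)
  then show "- int n \<le> x" "x \<le> int n"
    by (simp_all only: supp_xi_bounds)
qed

lemma xi_top_component:
  obtains s where "s \<in> {fst xi, snd xi}" "s \<noteq> 0" "Max (keys s) = int n"
proof -
  have "int n \<in> supp xi"
    using Max_in[OF finite_supp supp_xi_nonempty] by (simp add: supp_xi_bounds)
  then obtain s where s: "s \<in> {fst xi, snd xi}" "int n \<in> keys s"
    by (auto simp: supp_def)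
  moreover have "Max (keys s) = int n"
    using s keys_xi_bounds(2)[OF s(1)] by (intro Max_eqI) auto
  ultimately show thesis
    using that by fastforce
qed

lemma xi_bottom_component:
  obtains s where "s \<in> {fst xi, snd xi}" "s \<noteq> 0" "Min (keys s) = - int n"
proof -
  have "- int n \<in> supp xi"
    using Min_in[OF finite_supp supp_xi_nonempty] by (simp add: supp_xi_bounds)
  then obtain s where s: "s \<in> {fst xi, snd xi}" "- int n \<in> keys s"
    by (auto simp: supp_def)
  moreover have "Min (keys s) = - int n"
    using s keys_xi_bounds(1)[OF s(1)] by (intro Min_eqI) auto
  ultimately show thesis
    using that by fastforce
qed

lemma supp_Psi_subset_atMost_iff: "supp (Psi f) \<subseteq> {..a} \<longleftrightarrow> keys f \<subseteq> {..a - int n}"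
proof
  assume f: "keys f \<subseteq> {..a - int n}"
  have "keys (f * s) \<subseteq> {..a}" if s: "s \<in> {fst xi, snd xi}" for s
  proof
    fix x assume "x \<in> keys (f * s)"
    then obtain u v where "x = u + v" "u \<in> keys f" "v \<in> keys s"
      using keys_mult by blast
    then show "x \<in> {..a}"
      using f keys_xi_bounds(2)[OF s] by fastforce
  qed
  then show "supp (Psi f) \<subseteq> {..a}"
    by (simp add: supp_Psi)
next
  assume sub: "supp (Psi f) \<subseteq> {..a}"
  show "keys f \<subseteq> {..a - int n}"
  proof (cases "f = 0")
    case False
    obtain s where s: "s \<in> {fst xi, snd xi}" "s \<noteq> 0" "Max (keys s) = int n"
      by (rule xi_top_component)
    have "Max (keys (f * s)) \<in> supp (Psi f)"
      using s(1,2) False by (auto simp: supp_Psi)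
    then have bound: "Max (keys f) + int n \<le> a"
      using sub Max_keys_mult[OF False s(2)] s(3) by auto
    show ?thesis
    proof
      fix x assume "x \<in> keys f"
      then have "x \<le> Max (keys f)" by simp
      with bound show "x \<in> {..a - int n}" by simp
    qed
  qed simp
qed

lemma supp_Psi_subset_greaterThan_iff: "supp (Psi f) \<subseteq> {a<..} \<longleftrightarrow> keys f \<subseteq> {a + int n<..}"
proof
  assume f: "keys f \<subseteq> {a + int n<..}"
  have "keys (f * s) \<subseteq> {a<..}" if s: "s \<in> {fst xi, snd xi}" for s
  proof
    fix x assume "x \<in> keys (f * s)"
    then obtain u v where "x = u + v" "u \<in> keys f" "v \<in> keys s"
      using keys_mult by blast
    then show "x \<in> {a<..}"
      using f keys_xi_bounds(1)[OF s] by fastforce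
  qed
  then show "supp (Psi f) \<subseteq> {a<..}"
    by (simp add: supp_Psi)
next
  assume sub: "supp (Psi f) \<subseteq> {a<..}"
  show "keys f \<subseteq> {a + int n<..}"
  proof (cases "f = 0")
    case False
    obtain s where s: "s \<in> {fst xi, snd xi}" "s \<noteq> 0" "Min (keys s) = - int n"
      by (rule xi_bottom_component)
    have "Min (keys (f * s)) \<in> supp (Psi f)"
      using s(1,2) False by (auto simp: supp_Psi)
    then have bound: "a < Min (keys f) - int n"
      using sub Min_keys_mult[OF False s(2)] s(3) by auto
    show ?thesis
    proof
      fix x assume "x \<in> keys f"
      then have "Min (keys f) \<le> x" by simp
      with bound show "x \<in> {a + int n<..}" by simp
    qed
  qed simp
qed

definition cut_form :: "lpoly \<Rightarrow> lpoly \<Rightarrow> bit" where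
  "cut_form f g = sympl_on (left_half c) (Psi f) (Psi g)"

sublocale alternating_form cut_form
proof
  show "cut_form (f + g) h = cut_form f h + cut_form g h" for f g h
    using sympl_on_add_left[of "left_half c" "Psi f" "Psi g" "Psi h"]
    by (simp add: cut_form_def Psi_def distrib_right)
  show "cut_form f g = cut_form g f" for f g
    unfolding cut_form_def by (rule sympl_on_commute)
  show "cut_form f f = 0" for f
    unfolding cut_form_def by (rule sympl_on_self)
qed

lemma cut_form_monomial:
  "cut_form f (monomial t) =
     lookup (restrict_keys {..c} (f * fst xi) * snd xi + restrict_keys {..c} (f * snd xi) * fst xi) t"
proof -
  define T where "T = supp (Psi f) \<inter> {..c}"
  have restricted_product:
    "lookup (restrict_keys {..c} p * q) t = (\<Sum>x\<in>T. lookup p x * lookup q (x - t))"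
    if "palindrome q" "keys p \<subseteq> supp (Psi f)" for p q
  proof -
    have "lookup (restrict_keys {..c} p * q) t =
        (\<Sum>x\<in>T. lookup (restrict_keys {..c} p) x * lookup q (x - t))"
      using that by (intro lookup_mult_palindrome) (auto simp: T_def)
    also have "\<dots> = (\<Sum>x\<in>T. lookup p x * lookup q (x - t))"
      by (intro sum.cong) (auto simp: T_def lookup_restrict_keys)
    finally show ?thesis .
  qed
  have "cut_form f (monomial t) = (\<Sum>x\<in>T. sympl_at (Psi f) (Psi (monomial t)) x)"
    unfolding cut_form_def T_def left_half_def by (intro sympl_on_eq_sum) auto
  also have "\<dots> = (\<Sum>x\<in>T. lookup (f * fst xi) x * lookup (snd xi) (x - t))
      + (\<Sum>x\<in>T. lookup (f * snd xi) x * lookup (fst xi) (x - t))"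
    by (simp only: sympl_at_def Psi_def fst_conv snd_conv lookup_monomial_mult sum.distrib)
  also have "\<dots> = lookup (restrict_keys {..c} (f * fst xi) * snd xi
      + restrict_keys {..c} (f * snd xi) * fst xi) t"
    using palindromic by (simp add: lookup_add restricted_product supp_Psi)
  finally show ?thesis .
qed

lemma cut_form_eq_0_if_left:
  assumes "keys f \<subseteq> {..c - int n}"
  shows "cut_form f g = 0"
proof -
  have "keys (f * fst xi) \<subseteq> {..c}" "keys (f * snd xi) \<subseteq> {..c}"
    using assms supp_Psi_subset_atMost_iff[of f c] by (auto simp: supp_Psi)
  then have "cut_form f (monomial t) = lookup (f * fst xi * snd xi + f * snd xi * fst xi) t" for t
    by (simp add: cut_form_monomial restrict_keys_id)
  then have monomials: "cut_form f (monomial t) = 0" for t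
    by (simp add: ac_simps)
  have "cut_form f g = cut_form f (\<Sum>t\<in>keys g. monomial t)"
    by (simp only: sum_monomial_keys)
  also have "\<dots> = 0"
    by (simp add: sum_right monomials)
  finally show ?thesis .
qed

lemma cut_form_eq_0_if_right:
  assumes "keys f \<subseteq> {c + int n<..}"
  shows "cut_form f g = 0"
proof -
  have "supp (Psi f) \<inter> supp (Psi g) \<inter> left_half c = {}"
    using assms supp_Psi_subset_greaterThan_iff[of f c] by (auto simp: left_half_def)
  then show ?thesis
    unfolding cut_form_def sympl_on_def by (simp only: sum.empty)
qed

definition window :: "int set" where
  "window = {c - int n<..c + int n}"

lemma card_window: "card window = 2 * n"
  by (simp add: window_def)

lemma cut_form_restrict_window: "cut_form f g = cut_form (restrict_keys window f) g"
proof -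
  have "f = restrict_keys {..c - int n} f + restrict_keys {c + int n<..} f + restrict_keys window f"
    by (rule poly_mapping_eqI) (auto simp: lookup_add lookup_restrict_keys window_def)
  then have "cut_form f g = cut_form (restrict_keys {..c - int n} f) g
      + cut_form (restrict_keys {c + int n<..} f) g + cut_form (restrict_keys window f) g"
    by (metis add_left)
  then show ?thesis
    by (simp add: cut_form_eq_0_if_left cut_form_eq_0_if_right)
qed

lemma cut_form_nondegenerate:
  assumes f: "keys f \<subseteq> window" "f \<noteq> 0"
  shows "\<exists>g. keys g \<subseteq> window \<and> cut_form f g = 1"
proof (rule ccontr)
  assume "\<not> ?thesis"
  then have monomials: "cut_form f (monomial t) = 0" for t
    using cut_form_eq_0_if_left[of "monomial t" f] cut_form_eq_0_if_right[of "monomial t" f]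
    by (cases "t \<in> window") (auto simp: window_def commute[of f])
  \<comment> \<open>the parts of \<open>\<Psi> f\<close> left of the cut satisfy \<open>L1 \<xi>\<^sub>- = L2 \<xi>\<^sub>+\<close>, so they come from some \<open>h\<close>\<close>
  define L1 where "L1 = restrict_keys {..c} (f * fst xi)"
  define L2 where "L2 = restrict_keys {..c} (f * snd xi)"
  have "L1 * snd xi + L2 * fst xi = 0"
    by (rule poly_mapping_eqI) (simp add: L1_def L2_def cut_form_monomial[symmetric] monomials)
  then obtain h where h: "L1 = h * fst xi" "L2 = h * snd xi"
    using lcoprime_common_factor[OF coprime] by (metis lpoly_add_eq_0_iff)
  have "supp (Psi h) \<subseteq> {..c}"
    unfolding supp_Psi h[symmetric] by (auto simp: L1_def L2_def)
  then have h_left: "keys h \<subseteq> {..c - int n}"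
    by (simp add: supp_Psi_subset_atMost_iff)
  have "supp (Psi (f + h)) \<subseteq> - {..c}"
    using keys_add_restrict_keys[of "f * fst xi" "{..c}"] keys_add_restrict_keys[of "f * snd xi" "{..c}"]
    unfolding supp_Psi distrib_right h[symmetric] L1_def L2_def by blast
  then have "keys (f + h) \<subseteq> {c + int n<..}"
    by (simp add: supp_Psi_subset_greaterThan_iff[symmetric] Compl_atMost)
  then have "keys f \<inter> window = {}"
    using h_left keys_add[of "f + h" h] unfolding window_def by (fastforce simp: add.assoc)
  with f(1) have "keys f = {}" by blast
  with f(2) show False by simp
qed

lemma sympl_on_Psi: "sympl_on (left_half c) (Psi f) (Psi g) = cut_form f g"
  by (simp add: cut_form_def)

lemma cut_form_eq_1_crosses_cut:
  assumes "cut_form f g = 1"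
  shows "supp (Psi f) \<inter> left_half c \<noteq> {}" "supp (Psi f) \<inter> right_half c \<noteq> {}"
proof -
  show "supp (Psi f) \<inter> left_half c \<noteq> {}"
  proof
    assume "supp (Psi f) \<inter> left_half c = {}"
    then have "supp (Psi f) \<inter> supp (Psi g) \<inter> left_half c = {}" by blast
    then have "cut_form f g = 0"
      unfolding cut_form_def sympl_on_def by (simp only: sum.empty)
    with assms show False by simp
  qed
  show "supp (Psi f) \<inter> right_half c \<noteq> {}"
  proof
    assume "supp (Psi f) \<inter> right_half c = {}"
    then have "supp (Psi f) \<subseteq> {..c}"
      by (auto simp: right_half_def)
    then have "cut_form f g = 0"
      by (intro cut_form_eq_0_if_left) (simp add: supp_Psi_subset_atMost_iff)
    with assms show False by simp
  qed
qed

lemma sympl_on_Psi_left_supported: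
  assumes "s \<in> stab xi" "supp s \<subseteq> left_half c"
  shows "sympl_on (left_half c) (Psi f) s = 0"
proof -
  obtain g where g: "s = Psi g"
    using assms(1) stab_eq_range_Psi by blast
  with assms(2) have "keys g \<subseteq> {..c - int n}"
    by (simp add: left_half_def supp_Psi_subset_atMost_iff)
  then have "cut_form g f = 0"
    by (rule cut_form_eq_0_if_left)
  then show ?thesis
    by (simp add: g sympl_on_Psi commute[of f])
qed

lemma bell_pairs_of_symplectic_pairs:
  assumes pairs: "symplectic_pairs k e z"
  shows "bell_pairs xi c k (Psi \<circ> e) (Psi \<circ> z)"
  unfolding bell_pairs_def
proof (intro conjI allI impI ballI)
  fix i assume "i < k"
  then have ez: "cut_form (e i) (z i) = 1" and ze: "cut_form (z i) (e i) = 1"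
    using pairs commute[of "z i"] by (simp_all add: symplectic_pairs_def)
  show "(Psi \<circ> e) i \<in> stab xi" "(Psi \<circ> z) i \<in> stab xi"
    by (simp_all add: stab_eq_range_Psi)
  show "supp ((Psi \<circ> e) i) \<inter> left_half c \<noteq> {}" "supp ((Psi \<circ> e) i) \<inter> right_half c \<noteq> {}"
    using cut_form_eq_1_crosses_cut[OF ez] by simp_all
  show "supp ((Psi \<circ> z) i) \<inter> left_half c \<noteq> {}" "supp ((Psi \<circ> z) i) \<inter> right_half c \<noteq> {}"
    using cut_form_eq_1_crosses_cut[OF ze] by simp_all
  show "sympl_on (left_half c) ((Psi \<circ> e) i) ((Psi \<circ> z) i) = 1"
    using ez by (simp add: sympl_on_Psi)
  fix s assume "s \<in> stab xi" "supp s \<subseteq> left_half c"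
  then show "sympl_on (left_half c) ((Psi \<circ> e) i) s = 0" "sympl_on (left_half c) ((Psi \<circ> z) i) s = 0"
    by (simp_all add: sympl_on_Psi_left_supported)
next
  fix i j assume "i < k" "j < k" "i \<noteq> j"
  then show "sympl_on (left_half c) ((Psi \<circ> e) i) ((Psi \<circ> e) j) = 0"
    "sympl_on (left_half c) ((Psi \<circ> e) i) ((Psi \<circ> z) j) = 0"
    "sympl_on (left_half c) ((Psi \<circ> z) i) ((Psi \<circ> z) j) = 0"
    using pairs by (simp_all add: symplectic_pairs_def sympl_on_Psi)
qed

lemma symplectic_pairs_of_bell_pairs:
  assumes "bell_pairs xi c k eta zeta"
  obtains e z where "symplectic_pairs k e z"
proof -
  define e where "e i = (SOME f. eta i = Psi f)" for i
  define z where "z i = (SOME f. zeta i = Psi f)" for i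
  have "\<exists>f. eta i = Psi f" "\<exists>f. zeta i = Psi f" if "i < k" for i
    using assms that unfolding bell_pairs_def stab_eq_range_Psi by auto
  then have ez: "eta i = Psi (e i) \<and> zeta i = Psi (z i)" if "i < k" for i
    unfolding e_def z_def using that by (auto intro: someI_ex)
  have "symplectic_pairs k e z"
    using assms unfolding bell_pairs_def symplectic_pairs_def by (simp add: ez sympl_on_Psi)
  then show thesis ..
qed

lemma card_window_polys: "card {f. keys f \<subseteq> window} = 4 ^ n"
proof -
  have "finite window"
    by (simp add: window_def)
  then show ?thesis
    by (simp add: card_lpoly_keys_subset card_window power_mult)
qed

lemma finite_window_polys: "finite {f. keys f \<subseteq> window}"
  using card_window_polys by (intro card_ge_0_finite) simp

lemma bell_pairs_exist: "\<exists>eta zeta. bell_pairs xi c n eta zeta"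
proof -
  have "\<exists>e z. (\<forall>i<n. e i \<in> {f. keys f \<subseteq> window} \<and> z i \<in> {f. keys f \<subseteq> window}) \<and> symplectic_pairs n e z"
  proof (rule symplectic_basis_exists[OF _ card_window_polys])
    show "x - y \<in> {f. keys f \<subseteq> window}" if "x \<in> {f. keys f \<subseteq> window}" "y \<in> {f. keys f \<subseteq> window}" for x y
      using that keys_diff[of x y] by auto
  qed (use cut_form_nondegenerate in auto)
  then show ?thesis
    using bell_pairs_of_symplectic_pairs by blast
qed

lemma bell_pairs_le:
  assumes "bell_pairs xi c k eta zeta"
  shows "k \<le> n"
proof -
  obtain e z where "symplectic_pairs k e z"
    using assms by (rule symplectic_pairs_of_bell_pairs)
  then have "4 ^ k \<le> card {f. keys f \<subseteq> window}"
  proof (rule symplectic_pairs_card_bound[where \<pi> = "restrict_keys window"])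
    show "cut_form x y = cut_form x' y" if "restrict_keys window x = restrict_keys window x'" for x x' y
      using that by (simp only: cut_form_restrict_window[of x] cut_form_restrict_window[of x'])
  qed (auto simp: finite_window_polys)
  then show ?thesis
    by (simp add: card_window_polys)
qed

end

theorem mainTheorem14:
  fixes xi :: pvec and n :: nat and c :: int
  assumes "reflection_invariant xi"
    and "lcoprime (fst xi) (snd xi)"
    and "plength xi = 2 * n + 1"
  shows "entanglement xi c = n"
proof -
  interpret cut_chain xi n c
    using assms by unfold_locales
  show ?thesis
    unfolding entanglement_def
    using bell_pairs_exist bell_pairs_le by (intro Greatest_equality) blast+
qed

end
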